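(* Let $G$ be a connected bipartite graph with at least two vertices, $v\in V(G)$, and let $c_0$ be the mill-pond configuration $MP(v)$ ($c_0(v)=1$, $c_0(x)=0$ for $x\neq v$). Then the configurations of the diffusion process become periodic with period length $2$ after a pre-period of length $\epsilon(v)-1$.
   Context: Diffusion process: for a finite simple graph $G$ and a chip configuration $c_t:V(G)\to\mathbb{Z}$ (negative values allowed), the next configuration is defined simultaneously for every vertex $u$ by $c_{t+1}(u)=c_t(u)-|\{w\in N(u): c_t(u)>c_t(w)\}|+|\{w\in N(u): c_t(u)<c_t(w)\}|$. $\epsilon(v)=\max_{w\in V(G)}d(v,w)$ is the eccentricity of $v$. The period length is the least $p\geq1$ with $c_{t+p}=c_t$ for some $t$, and the pre-period length is the least such $t$ for that $p$. *)

theory Defs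
  imports Main
begin

definition simple_graph :: "'a set \<Rightarrow> ('a \<Rightarrow> 'a \<Rightarrow> bool) \<Rightarrow> bool" where
  "simple_graph V E \<longleftrightarrow> finite V \<and> (\<forall>u w. E u w \<longrightarrow> E w u) \<and> (\<forall>u. \<not> E u u)
     \<and> (\<forall>u w. E u w \<longrightarrow> u \<in> V \<and> w \<in> V)"

definition is_walk :: "'a set \<Rightarrow> ('a \<Rightarrow> 'a \<Rightarrow> bool) \<Rightarrow> 'a list \<Rightarrow> bool" where
  "is_walk V E xs \<longleftrightarrow> xs \<noteq> [] \<and> set xs \<subseteq> V \<and> (\<forall>i. Suc i < length xs \<longrightarrow> E (xs ! i) (xs ! Suc i))"

definition connected_graph :: "'a set \<Rightarrow> ('a \<Rightarrow> 'a \<Rightarrow> bool) \<Rightarrow> bool" where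
  "connected_graph V E \<longleftrightarrow> (\<forall>u\<in>V. \<forall>w\<in>V. \<exists>xs. is_walk V E xs \<and> hd xs = u \<and> last xs = w)"

definition bipartite_graph :: "'a set \<Rightarrow> ('a \<Rightarrow> 'a \<Rightarrow> bool) \<Rightarrow> bool" where
  "bipartite_graph V E \<longleftrightarrow> (\<exists>A \<subseteq> V. \<forall>u w. E u w \<longrightarrow> (u \<in> A \<longleftrightarrow> w \<notin> A))"

definition gdist :: "'a set \<Rightarrow> ('a \<Rightarrow> 'a \<Rightarrow> bool) \<Rightarrow> 'a \<Rightarrow> 'a \<Rightarrow> nat" where
  "gdist V E u w = (LEAST n. \<exists>xs. is_walk V E xs \<and> hd xs = u \<and> last xs = w \<and> length xs = Suc n)"

definition eccentricity :: "'a set \<Rightarrow> ('a \<Rightarrow> 'a \<Rightarrow> bool) \<Rightarrow> 'a \<Rightarrow> nat" where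
  "eccentricity V E v = Max (gdist V E v ` V)"

definition nbrs :: "'a set \<Rightarrow> ('a \<Rightarrow> 'a \<Rightarrow> bool) \<Rightarrow> 'a \<Rightarrow> 'a set" where
  "nbrs V E u = {w \<in> V. E u w}"

definition diffusion_step :: "'a set \<Rightarrow> ('a \<Rightarrow> 'a \<Rightarrow> bool) \<Rightarrow> ('a \<Rightarrow> int) \<Rightarrow> ('a \<Rightarrow> int)" where
  "diffusion_step V E c = (\<lambda>u. if u \<in> V then
      c u - int (card {w \<in> nbrs V E u. c u > c w}) + int (card {w \<in> nbrs V E u. c u < c w})
    else c u)"

definition diffusion :: "'a set \<Rightarrow> ('a \<Rightarrow> 'a \<Rightarrow> bool) \<Rightarrow> ('a \<Rightarrow> int) \<Rightarrow> nat \<Rightarrow> ('a \<Rightarrow> int)" where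
  "diffusion V E c0 t = (diffusion_step V E ^^ t) c0"

definition mill_pond :: "'a \<Rightarrow> 'a \<Rightarrow> int" where
  "mill_pond v = (\<lambda>x. if x = v then 1 else 0)"

definition period_length :: "(nat \<Rightarrow> 'b) \<Rightarrow> nat" where
  "period_length s = (LEAST p. p \<ge> 1 \<and> (\<exists>t. s (t + p) = s t))"

definition pre_period_length :: "(nat \<Rightarrow> 'b) \<Rightarrow> nat" where
  "pre_period_length s = (LEAST t. s (t + period_length s) = s t)"

end

theory Submission
  imports Defs
begin

(*
  With the sign of c_t(x) written as (-1)^(t + d(v,x)), adjacent vertices of a bipartite graph
  always carry opposite signs, so c_t(x) = (-1)^(t + d(v,x)) a_t(x) with a_t \<ge> 0, and the
  magnitudes evolve by a_{t+1}(x) = deg x - a_t(x) if a_t(x) > 0, and otherwise a_{t+1}(x) is the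
  number of neighbours w with a_t(w) > 0. Starting from v, the support of a_t spreads like a
  breadth-first search: it is empty beyond distance t, full at distance t, and behind the front an
  empty vertex has only occupied neighbours. Once the front has passed every vertex, i.e.
  \<epsilon>(v) \<le> t + 1, this forces a_{t+2} = a_t; before that, the vertex at distance t + 2
  is empty at time t but occupied at time t + 2. Period 1 is impossible because at v the signs
  alternate and a_t(v), a_{t+1}(v) cannot both vanish.
*)

lemma period_length_eq_2:
  assumes "s (t + 2) = s t" and "\<And>t. s (Suc t) \<noteq> s t"
  shows "period_length s = 2"
  unfolding period_length_def
proof (rule Least_equality)
  show "1 \<le> (2::nat) \<and> (\<exists>t. s (t + 2) = s t)" using assms(1) by auto
next
  fix p assume "1 \<le> p \<and> (\<exists>t. s (t + p) = s t)"
  then show "2 \<le> p" using assms(2) by (metis Suc_1 Suc_eq_plus1 le_antisym not_less_eq_eq)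
qed

lemma pre_period_length_eqI:
  assumes "period_length s = p" and "s (t + p) = s t" and "\<And>t'. s (t' + p) = s t' \<Longrightarrow> t \<le> t'"
  shows "pre_period_length s = t"
  unfolding pre_period_length_def assms(1) using assms(2,3) by (rule Least_equality)

locale finite_simple_graph =
  fixes V :: "'a set" and E :: "'a \<Rightarrow> 'a \<Rightarrow> bool"
  assumes simple: "simple_graph V E"
begin

lemma finite_V: "finite V"
  and edge_sym: "E u w \<Longrightarrow> E w u"
  and edge_irrefl: "\<not> E u u"
  and edge_in_V: "E u w \<Longrightarrow> u \<in> V \<and> w \<in> V"
  using simple unfolding simple_graph_def by blast+

lemma mem_nbrs_iff: "w \<in> nbrs V E x \<longleftrightarrow> E x w"
  using edge_in_V unfolding nbrs_def by blast

lemma finite_nbrs: "finite (nbrs V E x)"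
  using finite_V unfolding nbrs_def by simp

definition degree :: "'a \<Rightarrow> nat" where
  "degree x = card (nbrs V E x)"

lemma card_nbrs_filter_le_degree: "card {w \<in> nbrs V E x. P w} \<le> degree x"
  unfolding degree_def by (rule card_mono[OF finite_nbrs]) auto

lemma card_nbrs_filter_pos_iff: "0 < card {w \<in> nbrs V E x. P w} \<longleftrightarrow> (\<exists>w. E x w \<and> P w)"
proof -
  have "finite {w \<in> nbrs V E x. P w}" using finite_nbrs by simp
  then show ?thesis using mem_nbrs_iff by (simp add: card_gt_0_iff)
qed

lemma card_nbrs_filter_eq_degree_iff:
  "card {w \<in> nbrs V E x. P w} = degree x \<longleftrightarrow> (\<forall>w. E x w \<longrightarrow> P w)"
proof
  assume "card {w \<in> nbrs V E x. P w} = degree x"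
  then have "{w \<in> nbrs V E x. P w} = nbrs V E x"
    unfolding degree_def by (intro card_subset_eq[OF finite_nbrs]) auto
  then show "\<forall>w. E x w \<longrightarrow> P w" using mem_nbrs_iff by blast
next
  assume "\<forall>w. E x w \<longrightarrow> P w"
  then have "{w \<in> nbrs V E x. P w} = nbrs V E x" using mem_nbrs_iff by blast
  then show "card {w \<in> nbrs V E x. P w} = degree x" unfolding degree_def by simp
qed

lemma degree_pos_if_edge: "E x w \<Longrightarrow> 0 < degree x"
  using card_nbrs_filter_pos_iff[of x "\<lambda>_. True"] unfolding degree_def by auto

lemma is_walk_snoc:
  assumes "is_walk V E xs" "E (last xs) w"
  shows "is_walk V E (xs @ [w])"
proof -
  have "xs \<noteq> []" using assms(1) is_walk_def by blast
  have "E ((xs @ [w]) ! i) ((xs @ [w]) ! Suc i)" if "Suc i < length (xs @ [w])" for i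
  proof (cases "Suc i < length xs")
    case True
    then show ?thesis using assms(1) unfolding is_walk_def by (simp add: nth_append)
  next
    case False
    then have "i = length xs - 1" using that by simp
    then show ?thesis using assms(2) \<open>xs \<noteq> []\<close> by (simp add: nth_append last_conv_nth)
  qed
  then show ?thesis using assms edge_in_V unfolding is_walk_def by auto
qed

lemma is_walk_butlast:
  assumes "is_walk V E xs" "2 \<le> length xs"
  shows "is_walk V E (butlast xs)"
proof -
  have "butlast xs \<noteq> []" using assms(2) by (cases xs) auto
  then show ?thesis using assms(1) unfolding is_walk_def
    by (auto simp: nth_butlast dest: in_set_butlastD)
qed

lemma is_walk_ConsD:
  assumes "is_walk V E (x # xs)" "xs \<noteq> []"
  shows "E x (hd xs) \<and> is_walk V E xs"
proof -
  have "E ((x # xs) ! 0) ((x # xs) ! Suc 0)"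
    using assms unfolding is_walk_def by (metis length_Cons length_greater_0_conv not_less_eq)
  then show ?thesis using assms unfolding is_walk_def by (auto simp: hd_conv_nth)
qed

lemma is_walk_parity:
  assumes bipartition: "\<forall>u w. E u w \<longrightarrow> (u \<in> A \<longleftrightarrow> w \<notin> A)"
  shows "is_walk V E xs \<Longrightarrow> (hd xs \<in> A \<longleftrightarrow> last xs \<in> A) \<longleftrightarrow> odd (length xs)"
proof (induction xs)
  case Nil
  then show ?case by (simp add: is_walk_def)
next
  case (Cons x xs)
  show ?case
  proof (cases "xs = []")
    case False
    with is_walk_ConsD Cons.prems have "E x (hd xs)" "is_walk V E xs" by blast+
    with Cons.IH bipartition False show ?thesis by auto
  qed simp
qed

definition magnitude_step :: "('a \<Rightarrow> nat) \<Rightarrow> 'a \<Rightarrow> nat" where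
  "magnitude_step a x =
     (if x \<notin> V then 0
      else if 0 < a x then degree x - a x
      else card {w \<in> nbrs V E x. 0 < a w})"

lemma magnitude_step_le_degree: "magnitude_step a x \<le> degree x"
  unfolding magnitude_step_def using card_nbrs_filter_le_degree by auto

lemma magnitude_step_outside: "x \<notin> V \<Longrightarrow> magnitude_step a x = 0"
  unfolding magnitude_step_def by simp

lemma magnitude_step_saturated_nbr:
  assumes saturated: "magnitude_step a x = degree x" and edge: "E x w"
  shows "magnitude_step a w < degree w"
proof -
  have "x \<in> V" "w \<in> V" using edge_in_V[OF edge] by blast+
  have "0 < degree x" "0 < degree w"
    using degree_pos_if_edge[OF edge] degree_pos_if_edge[OF edge_sym[OF edge]] .
  then have "a x = 0"
    using saturated \<open>x \<in> V\<close> unfolding magnitude_step_def by (simp split: if_splits)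
  then have "card {u \<in> nbrs V E x. 0 < a u} = degree x"
    using saturated \<open>x \<in> V\<close> unfolding magnitude_step_def by simp
  then have "0 < a w" using card_nbrs_filter_eq_degree_iff[of x "\<lambda>u. 0 < a u"] edge by blast
  then show ?thesis using \<open>w \<in> V\<close> \<open>0 < degree w\<close> unfolding magnitude_step_def by simp
qed

lemma diffusion_step_uminus: "diffusion_step V E (- c) = - diffusion_step V E c"
  by (auto simp: diffusion_step_def)

lemma diffusion_step_alternating_pos:
  assumes alternating: "\<And>x w. E x w \<Longrightarrow> \<sigma> w = - \<sigma> x"
    and "x \<in> V" "\<sigma> x = 1" "a x \<le> degree x"
  shows "diffusion_step V E (\<lambda>y. \<sigma> y * int (a y)) x = - int (magnitude_step a x)"
proof -
  define c where "c = (\<lambda>y. \<sigma> y * int (a y))"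
  have nbr: "c w = - int (a w)" if "w \<in> nbrs V E x" for w
    using alternating[of x w] that \<open>\<sigma> x = 1\<close> mem_nbrs_iff unfolding c_def by simp
  have cx: "c x = int (a x)" using \<open>\<sigma> x = 1\<close> unfolding c_def by simp
  have lower: "{w \<in> nbrs V E x. c x > c w} = {w \<in> nbrs V E x. 0 < a x + a w}"
    and upper: "{w \<in> nbrs V E x. c x < c w} = {}"
    using nbr cx by auto
  have "diffusion_step V E c x
      = c x - int (card {w \<in> nbrs V E x. c x > c w}) + int (card {w \<in> nbrs V E x. c x < c w})"
    using \<open>x \<in> V\<close> by (simp add: diffusion_step_def)
  then have step: "diffusion_step V E c x = int (a x) - int (card {w \<in> nbrs V E x. 0 < a x + a w})"
    unfolding lower upper by (simp add: cx)
  show ?thesis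
  proof (cases "0 < a x")
    case True
    then have "{w \<in> nbrs V E x. 0 < a x + a w} = nbrs V E x" by auto
    then show ?thesis using True step \<open>x \<in> V\<close> \<open>a x \<le> degree x\<close>
      by (simp add: magnitude_step_def degree_def of_nat_diff flip: c_def)
  next
    case False
    then show ?thesis using step \<open>x \<in> V\<close> by (simp add: magnitude_step_def flip: c_def)
  qed
qed

lemma diffusion_step_alternating:
  assumes alternating: "\<And>x w. E x w \<Longrightarrow> \<sigma> w = - \<sigma> x"
    and unit: "\<And>x. \<sigma> x = 1 \<or> \<sigma> x = -1"
    and bounded: "\<And>x. x \<in> V \<Longrightarrow> a x \<le> degree x"
    and outside: "\<And>x. x \<notin> V \<Longrightarrow> a x = 0"
  shows "diffusion_step V E (\<lambda>x. \<sigma> x * int (a x)) = (\<lambda>x. - \<sigma> x * int (magnitude_step a x))"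
proof
  fix x
  consider "x \<notin> V" | "x \<in> V" "\<sigma> x = 1" | "x \<in> V" "\<sigma> x = -1" using unit by blast
  then show "diffusion_step V E (\<lambda>x. \<sigma> x * int (a x)) x = - \<sigma> x * int (magnitude_step a x)"
  proof cases
    case 1
    then show ?thesis using outside by (simp add: diffusion_step_def magnitude_step_outside)
  next
    case 2
    then show ?thesis using diffusion_step_alternating_pos[OF alternating] bounded by simp
  next
    case 3
    have "(\<lambda>y. \<sigma> y * int (a y)) = - (\<lambda>y. - \<sigma> y * int (a y))" by auto
    moreover have "diffusion_step V E (\<lambda>y. - \<sigma> y * int (a y)) x = - int (magnitude_step a x)"
      using 3 bounded by (intro diffusion_step_alternating_pos) (auto dest: alternating)
    ultimately show ?thesis using 3 by (simp add: diffusion_step_uminus)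
  qed
qed

end

locale connected_simple_graph = finite_simple_graph +
  assumes connected: "connected_graph V E"
begin

lemma gdist_walk:
  assumes "u \<in> V" "x \<in> V"
  obtains xs where "is_walk V E xs" "hd xs = u" "last xs = x" "length xs = Suc (gdist V E u x)"
proof -
  obtain xs where "is_walk V E xs" "hd xs = u" "last xs = x"
    using connected assms unfolding connected_graph_def by blast
  then have "\<exists>n xs. is_walk V E xs \<and> hd xs = u \<and> last xs = x \<and> length xs = Suc n"
    by (metis is_walk_def length_greater_0_conv Suc_pred)
  from LeastI_ex[OF this] show ?thesis
    using that unfolding gdist_def by blast
qed

lemma gdist_le:
  "is_walk V E xs \<Longrightarrow> hd xs = u \<Longrightarrow> last xs = x \<Longrightarrow> length xs = Suc n \<Longrightarrow> gdist V E u x \<le> n"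
  unfolding gdist_def by (rule Least_le) blast

lemma gdist_self: "u \<in> V \<Longrightarrow> gdist V E u u = 0"
  using gdist_le[of "[u]" u u 0] by (simp add: is_walk_def)

lemma gdist_eq_0_iff:
  assumes "u \<in> V" "x \<in> V"
  shows "gdist V E u x = 0 \<longleftrightarrow> x = u"
proof
  assume "gdist V E u x = 0"
  with gdist_walk[OF assms] obtain xs where "hd xs = u" "last xs = x" "length xs = 1"
    by (metis One_nat_def)
  then show "x = u" by (metis hd_conv_nth last_conv_nth list.size(3) zero_neq_one diff_self_eq_0)
qed (use gdist_self assms in simp)

lemma gdist_edge_le:
  assumes "u \<in> V" "E x w"
  shows "gdist V E u w \<le> Suc (gdist V E u x)"
proof -
  obtain xs where xs: "is_walk V E xs" "hd xs = u" "last xs = x" "length xs = Suc (gdist V E u x)"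
    using gdist_walk assms edge_in_V by blast
  then have "is_walk V E (xs @ [w])" using is_walk_snoc assms(2) by simp
  moreover have "hd (xs @ [w]) = u" using xs by (simp add: is_walk_def)
  ultimately show ?thesis using gdist_le[of "xs @ [w]" u w] xs by simp
qed

lemma gdist_SucE:
  assumes "u \<in> V" "x \<in> V" "gdist V E u x = Suc k"
  obtains w where "E w x" "gdist V E u w = k"
proof -
  obtain xs where xs: "is_walk V E xs" "hd xs = u" "last xs = x" "length xs = Suc (Suc k)"
    using gdist_walk assms by metis
  define ys where "ys = butlast xs"
  have ys: "is_walk V E ys" "hd ys = u" "length ys = Suc k"
    using xs is_walk_butlast[of xs] unfolding ys_def by (simp_all add: butlast_conv_take hd_take)
  have "ys \<noteq> []" using ys(3) by auto
  then have "last ys = xs ! k" using ys(3) by (simp add: last_conv_nth ys_def nth_butlast)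
  moreover have "x = xs ! Suc k"
    using xs(3,4) by (metis last_conv_nth list.size(3) Zero_not_Suc diff_Suc_1)
  ultimately have edge: "E (last ys) x" using xs unfolding is_walk_def by simp
  have "gdist V E u (last ys) \<le> k" using gdist_le[OF ys(1,2) refl ys(3)] .
  moreover have "Suc k \<le> Suc (gdist V E u (last ys))"
    using gdist_edge_le[OF assms(1) edge] assms(3) by simp
  ultimately show ?thesis using that edge by simp
qed

lemma gdist_attains_below:
  assumes "u \<in> V" "x \<in> V" "k \<le> gdist V E u x"
  shows "\<exists>y\<in>V. gdist V E u y = k"
  using assms(2,3)
proof (induction "gdist V E u x" arbitrary: x)
  case 0
  then show ?case by auto
next
  case (Suc n)
  show ?case
  proof (cases "k = Suc n")
    case False
    obtain w where "E w x" "gdist V E u w = n"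
      using gdist_SucE assms(1) Suc by metis
    moreover have "w \<in> V" using edge_in_V \<open>E w x\<close> by blast
    ultimately show ?thesis using Suc False by auto
  qed (use Suc in auto)
qed

lemma gdist_parity:
  assumes bipartition: "\<forall>u w. E u w \<longrightarrow> (u \<in> A \<longleftrightarrow> w \<notin> A)" and "u \<in> V" "x \<in> V"
  shows "(u \<in> A \<longleftrightarrow> x \<in> A) \<longleftrightarrow> even (gdist V E u x)"
proof -
  obtain xs where "is_walk V E xs" "hd xs = u" "last xs = x" "length xs = Suc (gdist V E u x)"
    using gdist_walk assms(2,3) .
  then show ?thesis using is_walk_parity[OF bipartition, of xs] by simp
qed

lemma gdist_edge:
  assumes "bipartite_graph V E" "u \<in> V" "E x w"
  shows "gdist V E u w = Suc (gdist V E u x) \<or> gdist V E u x = Suc (gdist V E u w)"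
proof -
  obtain A where bipartition: "\<forall>u w. E u w \<longrightarrow> (u \<in> A \<longleftrightarrow> w \<notin> A)"
    using assms(1) unfolding bipartite_graph_def by blast
  have "x \<in> V" "w \<in> V" using edge_in_V assms(3) by blast+
  then have "gdist V E u x \<noteq> gdist V E u w"
    using gdist_parity[OF bipartition assms(2)] bipartition assms(3) by metis
  moreover have "gdist V E u w \<le> Suc (gdist V E u x)" "gdist V E u x \<le> Suc (gdist V E u w)"
    using gdist_edge_le[OF assms(2,3)] gdist_edge_le[OF assms(2) edge_sym[OF assms(3)]] by simp_all
  ultimately show ?thesis by linarith
qed

lemma exists_nbr:
  assumes "2 \<le> card V" "x \<in> V"
  obtains w where "E x w"
proof -
  have "\<not> V \<subseteq> {x}"
    using assms(1) card_mono[of "{x}" V] by auto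
  then obtain y where "y \<in> V" "y \<noteq> x" by blast
  then obtain k where "gdist V E y x = Suc k"
    using gdist_eq_0_iff[OF _ assms(2)] by (cases "gdist V E y x") auto
  then obtain w where "E w x"
    using gdist_SucE \<open>y \<in> V\<close> assms(2) by blast
  then show ?thesis using that[OF edge_sym] by blast
qed

lemma gdist_le_eccentricity: "x \<in> V \<Longrightarrow> gdist V E u x \<le> eccentricity V E u"
  unfolding eccentricity_def using finite_V by (intro Max_ge) auto

lemma eccentricity_attained:
  assumes "V \<noteq> {}"
  obtains y where "y \<in> V" "gdist V E u y = eccentricity V E u"
proof -
  have "eccentricity V E u \<in> gdist V E u ` V"
    unfolding eccentricity_def using finite_V assms by (intro Max_in) blast+
  then obtain y where "y \<in> V" "eccentricity V E u = gdist V E u y" by blast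
  then show ?thesis using that by simp
qed

end

locale mill_pond_diffusion = connected_simple_graph +
  fixes v :: 'a
  assumes bipartite: "bipartite_graph V E" and two_vertices: "2 \<le> card V" and v_in_V: "v \<in> V"
begin

abbreviation level :: "'a \<Rightarrow> nat" where
  "level x \<equiv> gdist V E v x"

definition wave :: "nat \<Rightarrow> 'a \<Rightarrow> nat" where
  "wave t = (magnitude_step ^^ t) (\<lambda>x. if x = v then 1 else 0)"

lemma wave_0: "wave 0 x = (if x = v then 1 else 0)"
  by (simp add: wave_def)

lemma wave_Suc: "wave (Suc t) = magnitude_step (wave t)"
  by (simp add: wave_def)

lemma degree_pos: "x \<in> V \<Longrightarrow> 0 < degree x"
  using exists_nbr[OF two_vertices] degree_pos_if_edge by metis

lemma wave_le_degree: "x \<in> V \<Longrightarrow> wave t x \<le> degree x"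
  using degree_pos magnitude_step_le_degree
  by (cases t) (auto simp: wave_0 wave_Suc Suc_leI)

lemma wave_outside: "x \<notin> V \<Longrightarrow> wave t x = 0"
  using v_in_V by (cases t) (auto simp: wave_0 wave_Suc magnitude_step_outside)

lemma level_edge: "E x w \<Longrightarrow> level w = Suc (level x) \<or> level x = Suc (level w)"
  using gdist_edge[OF bipartite v_in_V] .

lemma diffusion_mill_pond:
  "diffusion V E (mill_pond v) t = (\<lambda>x. (-1) ^ (t + level x) * int (wave t x))"
proof (induction t)
  case 0
  show ?case using gdist_self[OF v_in_V]
    by (auto simp: diffusion_def mill_pond_def wave_0)
next
  case (Suc t)
  have alternating: "(-1) ^ (t + level w) = - ((-1) ^ (t + level x) :: int)" if "E x w" for x w
    using level_edge[OF that] by auto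
  have unit: "(-1) ^ n = (1 :: int) \<or> (-1) ^ n = (-1 :: int)" for n :: nat
    by (cases "even n") auto
  have "diffusion V E (mill_pond v) (Suc t) = diffusion_step V E (diffusion V E (mill_pond v) t)"
    by (simp add: diffusion_def)
  also have "\<dots> = (\<lambda>x. - ((-1) ^ (t + level x)) * int (magnitude_step (wave t) x))"
    unfolding Suc.IH using alternating unit wave_le_degree wave_outside
    by (intro diffusion_step_alternating)
  finally show ?case by (simp add: wave_Suc)
qed

lemma wave_beyond_front: "t < level x \<Longrightarrow> wave t x = 0"
proof (induction t arbitrary: x)
  case 0
  then have "x \<noteq> v" using gdist_self[OF v_in_V] by auto
  then show ?case by (simp add: wave_0)
next
  case (Suc t)
  have "\<not> 0 < wave t w" if "E x w" for w
  proof -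
    have "level x \<le> Suc (level w)" using gdist_edge_le[OF v_in_V edge_sym[OF that]] .
    then show ?thesis using Suc by simp
  qed
  then have "card {w \<in> nbrs V E x. 0 < wave t w} = 0"
    using card_nbrs_filter_pos_iff[of x "\<lambda>w. 0 < wave t w"] by blast
  then show ?case using Suc by (simp add: wave_Suc magnitude_step_def)
qed

lemma wave_at_front: "x \<in> V \<Longrightarrow> level x = t \<Longrightarrow> 0 < wave t x"
proof (induction t arbitrary: x)
  case 0
  then show ?case using gdist_eq_0_iff[OF v_in_V] by (simp add: wave_0)
next
  case (Suc t)
  obtain w where "E w x" "level w = t" using gdist_SucE[OF v_in_V] Suc.prems by blast
  then have "0 < wave t w" using Suc.IH edge_in_V by blast
  then have "0 < card {u \<in> nbrs V E x. 0 < wave t u}"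
    using card_nbrs_filter_pos_iff[of x "\<lambda>u. 0 < wave t u"] edge_sym[OF \<open>E w x\<close>] by blast
  moreover have "wave t x = 0" using wave_beyond_front Suc.prems by simp
  ultimately show ?case using Suc.prems by (simp add: wave_Suc magnitude_step_def)
qed

lemma wave_saturated_nbr: "wave t x = degree x \<Longrightarrow> E x w \<Longrightarrow> wave t w < degree w"
proof (cases t)
  case 0
  assume "wave t x = degree x" "E x w"
  then have "x = v" using degree_pos_if_edge[OF \<open>E x w\<close>] 0 by (auto simp: wave_0 split: if_splits)
  then have "w \<noteq> v" using edge_irrefl \<open>E x w\<close> by blast
  then show ?thesis using 0 degree_pos_if_edge[OF edge_sym[OF \<open>E x w\<close>]] by (simp add: wave_0)
qed (simp add: wave_Suc magnitude_step_saturated_nbr)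

lemma wave_behind_front:
  "x \<in> V \<Longrightarrow> level x \<le> t \<Longrightarrow> wave t x = 0 \<Longrightarrow> E x w \<Longrightarrow> 0 < wave t w"
proof (induction t arbitrary: x w)
  case 0
  then show ?case using gdist_eq_0_iff[OF v_in_V] by (simp add: wave_0)
next
  case (Suc t)
  have "0 < wave t x"
  proof (rule ccontr)
    assume "\<not> 0 < wave t x"
    then have "card {u \<in> nbrs V E x. 0 < wave t u} = 0"
      using Suc.prems by (simp add: wave_Suc magnitude_step_def)
    then have no_positive_nbr: "\<not> 0 < wave t u" if "E x u" for u
      using card_nbrs_filter_pos_iff[of x "\<lambda>u. 0 < wave t u"] that by auto
    show False
    proof (cases "level x \<le> t")
      case True
      then show False using Suc.IH Suc.prems \<open>\<not> 0 < wave t x\<close> no_positive_nbr by blast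
    next
      case False
      then obtain u where "E u x" "level u = t"
        using gdist_SucE[OF v_in_V \<open>x \<in> V\<close>] Suc.prems(2) by (metis le_SucE)
      then show False using wave_at_front edge_in_V no_positive_nbr edge_sym by blast
    qed
  qed
  then have "wave t x = degree x"
    using Suc.prems wave_le_degree[of x t] by (simp add: wave_Suc magnitude_step_def)
  then have "wave t w < degree w" using wave_saturated_nbr Suc.prems(4) by blast
  moreover have "w \<in> V" using edge_in_V Suc.prems(4) by blast
  moreover have "0 < card {u \<in> nbrs V E w. 0 < wave t u}"
    using card_nbrs_filter_pos_iff[of w "\<lambda>u. 0 < wave t u"] edge_sym[OF Suc.prems(4)]
      \<open>0 < wave t x\<close> by blast
  ultimately show ?case by (simp add: wave_Suc magnitude_step_def)
qed

lemma wave_periodic: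
  assumes "eccentricity V E v \<le> Suc t"
  shows "wave (Suc (Suc t)) x = wave t x"
proof (cases "x \<in> V")
  case False
  then show ?thesis using wave_outside by simp
next
  case True
  have level_le: "level y \<le> Suc t" if "y \<in> V" for y
    using gdist_le_eccentricity[OF that, of v] assms by simp
  have le: "wave t x \<le> degree x" using wave_le_degree True by simp
  consider "0 < wave t x" "wave t x < degree x" | "wave t x = degree x" "0 < wave t x"
    | "wave t x = 0" using le by linarith
  then show ?thesis
  proof cases
    case 1
    then show ?thesis using True by (simp add: wave_Suc magnitude_step_def)
  next
    case 2
    then have "wave (Suc t) x = 0" using True by (simp add: wave_Suc magnitude_step_def)
    then have "card {w \<in> nbrs V E x. 0 < wave (Suc t) w} = degree x"
      using wave_behind_front[OF True level_le[OF True]]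
        card_nbrs_filter_eq_degree_iff[of x "\<lambda>w. 0 < wave (Suc t) w"] by blast
    then show ?thesis using 2 \<open>wave (Suc t) x = 0\<close> True
      by (simp add: wave_Suc[of "Suc t"] magnitude_step_def)
  next
    case 3
    have "0 < wave t w" if "E x w" for w
    proof (cases "level x \<le> t")
      case True
      then show ?thesis using wave_behind_front \<open>x \<in> V\<close> 3 that by blast
    next
      case False
      have "w \<in> V" using edge_in_V that by blast
      then have "level w \<le> t" using level_le[of w] level_le[OF \<open>x \<in> V\<close>] level_edge[OF that] False
        by linarith
      then show ?thesis using wave_behind_front[OF \<open>w \<in> V\<close>] 3 edge_sym[OF that] by (metis gr0I)
    qed
    then have "card {w \<in> nbrs V E x. 0 < wave t w} = degree x"
      using card_nbrs_filter_eq_degree_iff[of x "\<lambda>w. 0 < wave t w"] by blast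
    then have "wave (Suc t) x = degree x" using 3 True by (simp add: wave_Suc magnitude_step_def)
    then show ?thesis using 3 True degree_pos by (simp add: wave_Suc[of "Suc t"] magnitude_step_def)
  qed
qed

abbreviation config :: "nat \<Rightarrow> 'a \<Rightarrow> int" where
  "config \<equiv> diffusion V E (mill_pond v)"

lemma config_periodic:
  "eccentricity V E v \<le> Suc t \<Longrightarrow> config (t + 2) = config t"
  using wave_periodic by (simp add: diffusion_mill_pond)

lemma config_not_fixed: "config (Suc t) \<noteq> config t"
proof
  assume "config (Suc t) = config t"
  then have "config (Suc t) v = config t v" by simp
  then have "(-1) ^ t * (int (wave t v) + int (wave (Suc t) v)) = 0"
    using gdist_self[OF v_in_V] by (simp add: diffusion_mill_pond algebra_simps)
  then have "wave t v = 0" "wave (Suc t) v = 0" by simp_all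
  moreover obtain w where "E v w" using exists_nbr[OF two_vertices v_in_V] .
  ultimately have "0 < wave t w"
    using wave_behind_front[OF v_in_V] gdist_self[OF v_in_V] by simp
  then have "0 < card {u \<in> nbrs V E v. 0 < wave t u}"
    using card_nbrs_filter_pos_iff[of v "\<lambda>u. 0 < wave t u"] \<open>E v w\<close> by blast
  then show False using \<open>wave t v = 0\<close> \<open>wave (Suc t) v = 0\<close> v_in_V
    by (simp add: wave_Suc magnitude_step_def)
qed

lemma config_not_2periodic:
  assumes "Suc t < eccentricity V E v"
  shows "config (t + 2) \<noteq> config t"
proof -
  obtain y where "y \<in> V" "level y = eccentricity V E v"
    using eccentricity_attained v_in_V by blast
  then obtain x where "x \<in> V" "level x = t + 2"
    using gdist_attains_below[OF v_in_V, of y "t + 2"] assms by auto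
  then have "0 < wave (t + 2) x" "wave t x = 0"
    using wave_at_front wave_beyond_front by auto
  then have "config (t + 2) x \<noteq> config t x"
    by (simp add: diffusion_mill_pond)
  then show ?thesis by auto
qed

end

theorem corollary21:
  fixes V :: "'a set" and E :: "'a \<Rightarrow> 'a \<Rightarrow> bool" and v :: 'a
  assumes "simple_graph V E"
    and "connected_graph V E"
    and "bipartite_graph V E"
    and "card V \<ge> 2"
    and "v \<in> V"
  shows "period_length (diffusion V E (mill_pond v)) = 2
       \<and> pre_period_length (diffusion V E (mill_pond v)) = eccentricity V E v - 1"
proof -
  interpret mill_pond_diffusion V E v
    using assms by unfold_locales
  have period: "period_length config = 2"
    using config_periodic[of "eccentricity V E v"] config_not_fixed
    by (intro period_length_eq_2) auto
  have "pre_period_length config = eccentricity V E v - 1"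
  proof (rule pre_period_length_eqI[OF period])
    show "config (eccentricity V E v - 1 + 2) = config (eccentricity V E v - 1)"
      by (rule config_periodic) simp
    show "eccentricity V E v - 1 \<le> t" if "config (t + 2) = config t" for t
      using config_not_2periodic[of t] that by linarith
  qed
  with period show ?thesis by simp
qed

end
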